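(* Let $R$ be a commutative ring, $\delta\in R$, $n\geq 0$. (1) If $x\in X\subseteq\{1,\dots,n\}$ and $n\geq 2$, then $\mathbb 1\otimes_{\mathcal P_n}\mathcal A_{X,x}=0$. (2) If $x\in X\subseteq\{1,\dots,n\}$, then $\mathbb 1\otimes_{\mathcal P_n}\mathcal B_{X,x}=0$. (3) If $Y\subseteq X\subseteq\{1,\dots,n\}$ with $|Y|\geq 2$, then $\mathbb 1\otimes_{\mathcal P_n}\mathcal M_{X,Y}=0$, and $\mathcal M_{X,Y}$ is a direct summand of the left $\mathcal P_n$-module $\mathcal P_n/J_{X-Y}$.
   Context: $\mathcal P_n=\mathcal P_n(R,\delta)$ is the partition algebra: the free $R$-module on set partitions ("diagrams") of $\{-n,\dots,-1,1,\dots,n\}$ (negative = left nodes, positive = right nodes), with product given by stacking (identifying right nodes of the first diagram with left nodes of the second), taking the induced partition on outer nodes, and multiplying by $\delta$ for each component consisting only of middle nodes. The trivial right module $\mathbb 1$ is $R$ with permutation diagrams (all blocks of the form $\{-i,j\}$) acting as the identity and other diagrams as $0$. For $Z\subseteq\{1,\dots,n\}$, $J_Z$ is the left ideal spanned by diagrams in which among the right nodes labelled by $Z$ there is a singleton block or two distinct nodes in the same block. For $Y\subseteq X\subseteq\{1,\dots,n\}$ and $x\in X$, define left submodules of $\mathcal P_n$: $A_x$ spanned by diagrams in which the right node $x$ is a singleton; $B_{X,x}$ spanned by diagrams in which $x$ lies in the same block as some other element of $X$; $M_Y$ spanned by diagrams in which all right nodes in $Y$ lie in one block. Set $\mathcal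 A_{X,x}=A_x/(A_x\cap J_{X-\{x\}})$, $\mathcal B_{X,x}=B_{X,x}/(B_{X,x}\cap J_{X-\{x\}})$, $\mathcal M_{X,Y}=M_Y/(M_Y\cap J_{X-Y})$; in particular $\mathcal M_{X,Y}$ is a submodule of $\mathcal P_n/J_{X-Y}$. *)

theory Defs
  imports "HOL-Library.Disjoint_Sets"
begin

text \<open>Nodes: negative integers -n..-1 are left nodes, positive 1..n right nodes.\<close>
definition nodes :: "nat \<Rightarrow> int set" where
  "nodes n = {- int n .. -1} \<union> {1 .. int n}"

definition Diag :: "nat \<Rightarrow> int set set set" where
  "Diag n = {d. partition_on (nodes n) d}"

text \<open>Stacking d1 on top of d2: vertices tagged by level 0 (outer left = left nodes of d1),
  1 (middle = right nodes of d1 identified with left nodes of d2), 2 (outer right = right nodes of d2).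
  Right node j of d1 and left node -j of d2 both become (1, j).\<close>
definition tagL :: "int \<Rightarrow> nat \<times> int" where
  "tagL i = (if i < 0 then (0, i) else (1, i))"

definition tagR :: "int \<Rightarrow> nat \<times> int" where
  "tagR i = (if i < 0 then (1, - i) else (2, i))"

definition stack_rel :: "int set set \<Rightarrow> int set set \<Rightarrow> ((nat \<times> int) \<times> (nat \<times> int)) set" where
  "stack_rel d1 d2 =
     {(tagL a, tagL b) | a b. \<exists>B\<in>d1. a \<in> B \<and> b \<in> B} \<union>
     {(tagR a, tagR b) | a b. \<exists>B\<in>d2. a \<in> B \<and> b \<in> B}"

definition stack_verts :: "int set set \<Rightarrow> int set set \<Rightarrow> (nat \<times> int) set" where
  "stack_verts d1 d2 = tagL ` \<Union>d1 \<union> tagR ` \<Union>d2"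

definition stack_comps :: "int set set \<Rightarrow> int set set \<Rightarrow> (nat \<times> int) set set" where
  "stack_comps d1 d2 = stack_verts d1 d2 // (stack_rel d1 d2)\<^sup>+"

definition dcomp :: "int set set \<Rightarrow> int set set \<Rightarrow> int set set" where
  "dcomp d1 d2 = {snd ` {v \<in> C. fst v \<noteq> 1} | C. C \<in> stack_comps d1 d2 \<and> (\<exists>v\<in>C. fst v \<noteq> 1)}"

definition dmid :: "int set set \<Rightarrow> int set set \<Rightarrow> nat" where
  "dmid d1 d2 = card {C \<in> stack_comps d1 d2. \<forall>v\<in>C. fst v = 1}"

definition PA :: "nat \<Rightarrow> (int set set \<Rightarrow> 'a::comm_ring_1) set" where
  "PA n = {f. \<forall>d. d \<notin> Diag n \<longrightarrow> f d = 0}"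

definition pzero :: "int set set \<Rightarrow> 'a::comm_ring_1" where
  "pzero = (\<lambda>d. 0)"

definition padd :: "(int set set \<Rightarrow> 'a::comm_ring_1) \<Rightarrow> (int set set \<Rightarrow> 'a) \<Rightarrow> int set set \<Rightarrow> 'a" where
  "padd f g = (\<lambda>d. f d + g d)"

definition pdiff :: "(int set set \<Rightarrow> 'a::comm_ring_1) \<Rightarrow> (int set set \<Rightarrow> 'a) \<Rightarrow> int set set \<Rightarrow> 'a" where
  "pdiff f g = (\<lambda>d. f d - g d)"

definition pscal :: "'a::comm_ring_1 \<Rightarrow> (int set set \<Rightarrow> 'a) \<Rightarrow> int set set \<Rightarrow> 'a" where
  "pscal r f = (\<lambda>d. r * f d)"

definition pmult :: "nat \<Rightarrow> 'a::comm_ring_1 \<Rightarrow> (int set set \<Rightarrow> 'a) \<Rightarrow> (int set set \<Rightarrow> 'a) \<Rightarrow> int set set \<Rightarrow> 'a" where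
  "pmult n \<delta> f g = (\<lambda>d. \<Sum>(d1, d2) \<in> {(d1, d2). d1 \<in> Diag n \<and> d2 \<in> Diag n \<and> dcomp d1 d2 = d}.
                          f d1 * g d2 * \<delta> ^ dmid d1 d2)"

definition is_perm_diag :: "nat \<Rightarrow> int set set \<Rightarrow> bool" where
  "is_perm_diag n d \<longleftrightarrow> (\<forall>B\<in>d. \<exists>i j. 1 \<le> i \<and> i \<le> int n \<and> 1 \<le> j \<and> j \<le> int n \<and> B = {- i, j})"

text \<open>The action of a on the generator 1 of the trivial right module.\<close>
definition eps :: "nat \<Rightarrow> (int set set \<Rightarrow> 'a::comm_ring_1) \<Rightarrow> 'a" where
  "eps n f = (\<Sum>d \<in> {d \<in> Diag n. is_perm_diag n d}. f d)"

definition rsubmod :: "nat \<Rightarrow> (int set set \<Rightarrow> 'a::comm_ring_1) set \<Rightarrow> bool" where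
  "rsubmod n V \<longleftrightarrow> V \<subseteq> PA n \<and> pzero \<in> V \<and> (\<forall>u\<in>V. \<forall>v\<in>V. padd u v \<in> V)
      \<and> (\<forall>r. \<forall>u\<in>V. pscal r u \<in> V)"

definition rspan :: "nat \<Rightarrow> (int set set \<Rightarrow> 'a::comm_ring_1) set \<Rightarrow> (int set set \<Rightarrow> 'a) set" where
  "rspan n S = \<Inter>{V. rsubmod n V \<and> S \<subseteq> V}"

definition left_submod :: "nat \<Rightarrow> 'a::comm_ring_1 \<Rightarrow> (int set set \<Rightarrow> 'a) set \<Rightarrow> bool" where
  "left_submod n \<delta> C \<longleftrightarrow> rsubmod n C \<and> (\<forall>a\<in>PA n. \<forall>c\<in>C. pmult n \<delta> a c \<in> C)"

definition setplus :: "(int set set \<Rightarrow> 'a::comm_ring_1) set \<Rightarrow> (int set set \<Rightarrow> 'a) set \<Rightarrow> (int set set \<Rightarrow> 'a) set" where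
  "setplus U V = {padd u v | u v. u \<in> U \<and> v \<in> V}"

text \<open>R-span of the diagrams satisfying P (the free module is the set of finitely
  supported coefficient functions, so this is the set of functions supported on them).\<close>
definition dspan :: "nat \<Rightarrow> (int set set \<Rightarrow> bool) \<Rightarrow> (int set set \<Rightarrow> 'a::comm_ring_1) set" where
  "dspan n P = {f \<in> PA n. \<forall>d. f d \<noteq> 0 \<longrightarrow> P d}"

text \<open>For left submodules N \<subseteq> M of P_n:  1 \<otimes>_{P_n} (M/N) = 0.
  Since 1 = R with right action x.a = x eps(a), the tensor product
  1 \<otimes>_{P_n} L is L modulo the R-span of all a.l - eps(a) l; for L = M/N this says
  M = N + span{a.m - eps(a) m | a \<in> P_n, m \<in> M}.\<close>
definition triv_tensor_quot_zero ::
  "nat \<Rightarrow> 'a::comm_ring_1 \<Rightarrow> (int set set \<Rightarrow> 'a) set \<Rightarrow> (int set set \<Rightarrow> 'a) set \<Rightarrow> bool" where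
  "triv_tensor_quot_zero n \<delta> M N \<longleftrightarrow>
     M \<subseteq> setplus N (rspan n {pdiff (pmult n \<delta> a m) (pscal (eps n a) m) | a m. a \<in> PA n \<and> m \<in> M})"

text \<open>The image (M + J)/J of M in P_n/J is a direct summand of the left module P_n/J:
  there is a left submodule C/J of P_n/J (i.e. a left submodule C of P_n containing J)
  with P_n/J = (M+J)/J + C/J and (M+J)/J \<inter> C/J = 0.\<close>
definition direct_summand_quot :: "nat \<Rightarrow> 'a::comm_ring_1 \<Rightarrow> (int set set \<Rightarrow> 'a) set \<Rightarrow> (int set set \<Rightarrow> 'a) set \<Rightarrow> bool" where
  "direct_summand_quot n \<delta> M J \<longleftrightarrow>
     (\<exists>C. left_submod n \<delta> C \<and> J \<subseteq> C
        \<and> (\<forall>f\<in>PA n. \<exists>m\<in>M. \<exists>c\<in>C. pdiff f (padd m c) \<in> J)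
        \<and> (\<forall>m\<in>M. m \<in> C \<longrightarrow> m \<in> J))"

definition J_mod :: "nat \<Rightarrow> nat set \<Rightarrow> (int set set \<Rightarrow> 'a::comm_ring_1) set" where
  "J_mod n Z = dspan n (\<lambda>d. (\<exists>z\<in>Z. {int z} \<in> d)
                           \<or> (\<exists>z1\<in>Z. \<exists>z2\<in>Z. z1 \<noteq> z2 \<and> (\<exists>B\<in>d. int z1 \<in> B \<and> int z2 \<in> B)))"

definition A_mod :: "nat \<Rightarrow> nat \<Rightarrow> (int set set \<Rightarrow> 'a::comm_ring_1) set" where
  "A_mod n x = dspan n (\<lambda>d. {int x} \<in> d)"

definition B_mod :: "nat \<Rightarrow> nat set \<Rightarrow> nat \<Rightarrow> (int set set \<Rightarrow> 'a::comm_ring_1) set" where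
  "B_mod n X x = dspan n (\<lambda>d. \<exists>y\<in>X. y \<noteq> x \<and> (\<exists>B\<in>d. int x \<in> B \<and> int y \<in> B))"

definition M_mod :: "nat \<Rightarrow> nat set \<Rightarrow> (int set set \<Rightarrow> 'a::comm_ring_1) set" where
  "M_mod n Y = dspan n (\<lambda>d. \<exists>B\<in>d. int ` Y \<subseteq> B)"

end

theory Submission
  imports Defs
begin

text \<open>
  For the tensor statements, every spanning diagram \<open>d\<close> of the module has a right unit \<open>t\<close> in the
  same module: \<open>d \<cdot> t = d\<close> without closed loops. As \<open>d\<close> has a singleton right node or two right
  nodes in one block, it is not a permutation diagram, so \<open>\<epsilon>(d) = 0\<close> and \<open>d = d \<cdot> t - \<epsilon>(d) t\<close>
  is a relation of \<open>\<one> \<otimes> -\<close>. For \<open>A\<^sub>x\<close> the unit keeps \<open>x\<close> isolated and sends \<open>-x\<close> to a second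
  node \<open>y\<close> (this needs \<open>n \<ge> 2\<close>); for \<open>B\<close> and \<open>M\<close> it joins \<open>\<plusminus>y\<close> for all relevant \<open>y\<close> into
  one block and is the identity elsewhere.

  For the direct summand, merging the blocks of a diagram that meet \<open>Y\<close> commutes with stacking
  on the left and preserves the number of closed loops, so its linear extension \<open>\<Phi>\<close> is
  \<open>\<P>\<^sub>n\<close>-linear. It is a projection onto \<open>M\<^sub>Y\<close> and maps \<open>J\<^bsub>X-Y\<^esub>\<close> into itself because \<open>X - Y\<close> is
  disjoint from \<open>Y\<close>; hence \<open>f = \<Phi> f + (f - \<Phi> f)\<close> splits \<open>\<P>\<^sub>n\<close>, with complement
  \<open>\<Phi>\<^sup>-\<^sup>1(J\<^bsub>X-Y\<^esub>)\<close>.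
\<close>

definition block_rel :: "int set set \<Rightarrow> (int \<times> int) set" where
  "block_rel d = {(u, v). \<exists>B\<in>d. u \<in> B \<and> v \<in> B}"

lemma in_block_rel_iff: "(u, v) \<in> block_rel d \<longleftrightarrow> (\<exists>B\<in>d. u \<in> B \<and> v \<in> B)"
  by (simp add: block_rel_def)

lemma block_rel_quotient:
  assumes "equiv A r"
  shows "block_rel (A // r) = r"
proof
  show "block_rel (A // r) \<subseteq> r"
    using in_quotient_imp_in_rel[OF assms] by (auto simp: block_rel_def)
  show "r \<subseteq> block_rel (A // r)"
  proof
    fix p assume p: "p \<in> r"
    then obtain x y where xy: "p = (x, y)" "x \<in> A"
      using assms by (cases p) (auto simp: equiv_def refl_on_def)
    then have "r `` {x} \<in> A // r" "x \<in> r `` {x}" "y \<in> r `` {x}"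
      using p equiv_class_self[OF assms] by (auto intro: quotientI)
    then show "p \<in> block_rel (A // r)"
      using xy by (auto simp: block_rel_def)
  qed
qed

lemma Union_Diag: "d \<in> Diag n \<Longrightarrow> \<Union>d = nodes n"
  by (simp add: Diag_def partition_on_def)

lemma equiv_block_rel: "d \<in> Diag n \<Longrightarrow> equiv (nodes n) (block_rel d)"
  unfolding block_rel_def by (rule equiv_partition_on) (simp add: Diag_def)

lemma quotient_block_rel: "d \<in> Diag n \<Longrightarrow> nodes n // block_rel d = d"
  unfolding block_rel_def by (rule partition_on_eq_quotient) (simp add: Diag_def)

lemma Diag_eqI: "d \<in> Diag n \<Longrightarrow> d' \<in> Diag n \<Longrightarrow> block_rel d = block_rel d' \<Longrightarrow> d = d'"
  by (metis quotient_block_rel)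

lemma quotient_in_Diag: "equiv (nodes n) r \<Longrightarrow> nodes n // r \<in> Diag n"
  by (simp add: Diag_def partition_on_quotient)

lemma block_rel_in_nodes: "d \<in> Diag n \<Longrightarrow> (u, v) \<in> block_rel d \<Longrightarrow> u \<in> nodes n \<and> v \<in> nodes n"
  using Union_Diag by (fastforce simp: block_rel_def)

lemma block_rel_refl: "d \<in> Diag n \<Longrightarrow> u \<in> nodes n \<Longrightarrow> (u, u) \<in> block_rel d"
  using Union_Diag by (fastforce simp: block_rel_def)

lemma block_rel_sym: "(u, v) \<in> block_rel d \<Longrightarrow> (v, u) \<in> block_rel d"
  by (auto simp: block_rel_def)

lemma block_rel_trans:
  "d \<in> Diag n \<Longrightarrow> (u, v) \<in> block_rel d \<Longrightarrow> (v, w) \<in> block_rel d \<Longrightarrow> (u, w) \<in> block_rel d"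
  using equiv_block_rel by (meson equivE transE)

lemma singleton_in_Diag_iff:
  assumes d: "d \<in> Diag n"
  shows "{u} \<in> d \<longleftrightarrow> u \<in> nodes n \<and> (\<forall>v. (u, v) \<in> block_rel d \<longrightarrow> v = u)"
proof
  assume u: "{u} \<in> d"
  have "v = u" if h: "(u, v) \<in> block_rel d" for v
  proof -
    obtain B where B: "B \<in> d" "u \<in> B" "v \<in> B" using h unfolding block_rel_def by blast
    have "disjoint d" using d by (simp add: Diag_def partition_on_def)
    moreover have "B \<inter> {u} \<noteq> {}" using B by blast
    ultimately have "B = {u}" using B(1) u unfolding disjoint_def by meson
    then show ?thesis using B by simp
  qed
  then show "u \<in> nodes n \<and> (\<forall>v. (u, v) \<in> block_rel d \<longrightarrow> v = u)"
    using u Union_Diag[OF d] by blast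
next
  assume h: "u \<in> nodes n \<and> (\<forall>v. (u, v) \<in> block_rel d \<longrightarrow> v = u)"
  then obtain B where B: "B \<in> d" "u \<in> B" using Union_Diag[OF d] by blast
  then have "B = {u}" using h by (auto simp: block_rel_def)
  then show "{u} \<in> d" using B by simp
qed

lemma finite_nodes: "finite (nodes n)"
  by (simp add: nodes_def)

lemma finite_Diag: "finite (Diag n)"
proof -
  have "Diag n \<subseteq> Pow (Pow (nodes n))"
    by (auto simp: Diag_def partition_on_def)
  then show ?thesis by (rule finite_subset) (simp add: finite_nodes)
qed

lemma mem_nodes_iff: "u \<in> nodes n \<longleftrightarrow> (- int n \<le> u \<and> u \<le> -1) \<or> (1 \<le> u \<and> u \<le> int n)"
  by (auto simp: nodes_def)

lemma of_nat_in_nodes: "y \<in> {1..n} \<Longrightarrow> int y \<in> nodes n"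
  by (auto simp: mem_nodes_iff)

lemma uminus_in_nodes: "u \<in> nodes n \<Longrightarrow> - u \<in> nodes n"
  by (auto simp: mem_nodes_iff)

lemma nodes_nonzero: "u \<in> nodes n \<Longrightarrow> u \<noteq> 0"
  by (auto simp: mem_nodes_iff)

lemma abs_in_nodes: "u \<in> nodes n \<Longrightarrow> \<bar>u\<bar> \<in> nodes n \<and> 0 < \<bar>u\<bar>"
  by (auto simp: mem_nodes_iff)

section \<open>Stacking diagrams\<close>

definition tag_outer :: "int \<Rightarrow> nat \<times> int" where
  "tag_outer u = (if u < 0 then (0, u) else (2, u))"

abbreviation stack_conn :: "int set set \<Rightarrow> int set set \<Rightarrow> ((nat \<times> int) \<times> (nat \<times> int)) set" where
  "stack_conn d1 d2 \<equiv> (stack_rel d1 d2)\<^sup>+"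

definition outer_rel :: "nat \<Rightarrow> int set set \<Rightarrow> int set set \<Rightarrow> (int \<times> int) set" where
  "outer_rel n d1 d2 =
     {(u, v). u \<in> nodes n \<and> v \<in> nodes n \<and> (tag_outer u, tag_outer v) \<in> stack_conn d1 d2}"

lemma stack_rel_iff:
  "(p, q) \<in> stack_rel d1 d2 \<longleftrightarrow>
     (\<exists>a b. p = tagL a \<and> q = tagL b \<and> (a, b) \<in> block_rel d1) \<or>
     (\<exists>a b. p = tagR a \<and> q = tagR b \<and> (a, b) \<in> block_rel d2)"
  by (auto simp: stack_rel_def block_rel_def)

lemma stack_rel_tagL: "(a, b) \<in> block_rel d1 \<Longrightarrow> (tagL a, tagL b) \<in> stack_rel d1 d2"
  by (auto simp: stack_rel_iff)

lemma stack_rel_tagR: "(a, b) \<in> block_rel d2 \<Longrightarrow> (tagR a, tagR b) \<in> stack_rel d1 d2"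
  by (auto simp: stack_rel_iff)

lemma stack_rel_mono_right: "block_rel d \<subseteq> block_rel d' \<Longrightarrow> stack_rel a d \<subseteq> stack_rel a d'"
  by (rule subrelI) (auto simp: stack_rel_iff)

lemma sym_stack_rel: "sym (stack_rel d1 d2)"
  unfolding sym_def stack_rel_iff using block_rel_sym by blast

lemma stack_conn_sym: "(p, q) \<in> stack_conn d1 d2 \<Longrightarrow> (q, p) \<in> stack_conn d1 d2"
  by (rule symD[OF sym_trancl[OF sym_stack_rel]])

lemma tag_outer_of_nat: "tag_outer (int y) = (2, int y)"
  and tagR_of_nat: "tagR (int y) = (2, int y)"
  by (auto simp: tag_outer_def tagR_def)

lemma fst_tag_outer: "fst (tag_outer u) \<noteq> 1"
  and snd_tag_outer: "snd (tag_outer u) = u"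
  by (auto simp: tag_outer_def)

lemma snd_tagL: "snd (tagL a) = a"
  and snd_tagR: "snd (tagR a) = \<bar>a\<bar>"
  by (auto simp: tagL_def tagR_def)

lemma inj_tag_outer: "inj tag_outer"
  by (metis injI snd_tag_outer)

lemma stack_verts_eq:
  "d1 \<in> Diag n \<Longrightarrow> d2 \<in> Diag n \<Longrightarrow> stack_verts d1 d2 = tagL ` nodes n \<union> tagR ` nodes n"
  by (simp add: stack_verts_def Union_Diag)

lemma tag_outer_in_stack_verts:
  assumes "d1 \<in> Diag n" "d2 \<in> Diag n" "u \<in> nodes n"
  shows "tag_outer u \<in> stack_verts d1 d2"
proof (cases "u < 0")
  case True
  then have "tag_outer u = tagL u" by (simp add: tag_outer_def tagL_def)
  then show ?thesis using assms by (simp add: stack_verts_eq)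
next
  case False
  then have "tag_outer u = tagR u" by (simp add: tag_outer_def tagR_def)
  then show ?thesis using assms by (simp add: stack_verts_eq)
qed

lemma outer_vertex:
  "d1 \<in> Diag n \<Longrightarrow> d2 \<in> Diag n \<Longrightarrow> v \<in> stack_verts d1 d2 \<Longrightarrow> fst v \<noteq> 1 \<Longrightarrow>
     snd v \<in> nodes n \<and> tag_outer (snd v) = v"
  by (auto simp: stack_verts_eq tagL_def tagR_def tag_outer_def uminus_in_nodes)

lemma middle_vertex:
  "d1 \<in> Diag n \<Longrightarrow> d2 \<in> Diag n \<Longrightarrow> v \<in> stack_verts d1 d2 \<Longrightarrow> fst v = 1 \<Longrightarrow>
     v = (1, snd v) \<and> 1 \<le> snd v \<and> snd v \<le> int n"
  by (auto simp: stack_verts_eq tagL_def tagR_def mem_nodes_iff split: if_splits)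

lemma equiv_stack_conn:
  assumes "d1 \<in> Diag n" "d2 \<in> Diag n"
  shows "equiv (stack_verts d1 d2) (stack_conn d1 d2)"
proof -
  have "stack_rel d1 d2 \<subseteq> stack_verts d1 d2 \<times> stack_verts d1 d2"
    using block_rel_in_nodes[OF assms(1)] block_rel_in_nodes[OF assms(2)]
    by (auto simp: stack_rel_iff stack_verts_eq[OF assms])
  then have sub: "stack_conn d1 d2 \<subseteq> stack_verts d1 d2 \<times> stack_verts d1 d2"
    using trancl_subset_Sigma by blast
  have "(v, v) \<in> stack_rel d1 d2" if "v \<in> stack_verts d1 d2" for v
    using that block_rel_refl[OF assms(1)] block_rel_refl[OF assms(2)]
    unfolding stack_verts_eq[OF assms] by (auto intro: stack_rel_tagL stack_rel_tagR)
  then have "refl_on (stack_verts d1 d2) (stack_conn d1 d2)"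
    using sub by (auto simp: refl_on_def)
  then show ?thesis
    using sub sym_trancl[OF sym_stack_rel] by (intro equivI) auto
qed

lemma stack_conn_in_verts:
  "d1 \<in> Diag n \<Longrightarrow> d2 \<in> Diag n \<Longrightarrow> (p, q) \<in> stack_conn d1 d2 \<Longrightarrow>
     p \<in> stack_verts d1 d2 \<and> q \<in> stack_verts d1 d2"
  using equiv_stack_conn equiv_type by blast

lemma equiv_outer_rel:
  assumes "d1 \<in> Diag n" "d2 \<in> Diag n"
  shows "equiv (nodes n) (outer_rel n d1 d2)"
proof (rule equivI)
  show "outer_rel n d1 d2 \<subseteq> nodes n \<times> nodes n"
    by (auto simp: outer_rel_def)
  show "refl_on (nodes n) (outer_rel n d1 d2)"
    using equiv_stack_conn[OF assms] tag_outer_in_stack_verts[OF assms]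
    by (auto simp: outer_rel_def refl_on_def elim!: equivE)
  show "sym (outer_rel n d1 d2)"
    by (auto simp: outer_rel_def sym_def intro: stack_conn_sym)
  show "trans (outer_rel n d1 d2)"
    by (auto simp: outer_rel_def trans_def)
qed

lemma outer_part_of_class:
  assumes "d1 \<in> Diag n" "d2 \<in> Diag n" "u \<in> nodes n"
  shows "snd ` {v \<in> stack_conn d1 d2 `` {tag_outer u}. fst v \<noteq> 1} = outer_rel n d1 d2 `` {u}"
proof
  show "snd ` {v \<in> stack_conn d1 d2 `` {tag_outer u}. fst v \<noteq> 1} \<subseteq> outer_rel n d1 d2 `` {u}"
    using assms outer_vertex[OF assms(1,2)] stack_conn_in_verts[OF assms(1,2)]
    by (fastforce simp: outer_rel_def)
  show "outer_rel n d1 d2 `` {u} \<subseteq> snd ` {v \<in> stack_conn d1 d2 `` {tag_outer u}. fst v \<noteq> 1}"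
  proof
    fix w assume "w \<in> outer_rel n d1 d2 `` {u}"
    then have "(tag_outer u, tag_outer w) \<in> stack_conn d1 d2" by (auto simp: outer_rel_def)
    then show "w \<in> snd ` {v \<in> stack_conn d1 d2 `` {tag_outer u}. fst v \<noteq> 1}"
      by (intro image_eqI[of _ _ "tag_outer w"]) (auto simp: tag_outer_def)
  qed
qed

lemma dcomp_eq_quotient:
  assumes d: "d1 \<in> Diag n" "d2 \<in> Diag n"
  shows "dcomp d1 d2 = nodes n // outer_rel n d1 d2"
proof
  note E = equiv_stack_conn[OF d]
  show "dcomp d1 d2 \<subseteq> nodes n // outer_rel n d1 d2"
  proof
    fix p assume "p \<in> dcomp d1 d2"
    then obtain C v where C: "C \<in> stack_comps d1 d2" "v \<in> C" "fst v \<noteq> 1"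
      and p: "p = snd ` {v \<in> C. fst v \<noteq> 1}"
      unfolding dcomp_def by blast
    obtain w where w: "C = stack_conn d1 d2 `` {w}"
      using C(1) by (auto simp: stack_comps_def quotient_def)
    have v: "v \<in> stack_verts d1 d2"
      using C in_quotient_imp_subset[OF E] by (auto simp: stack_comps_def)
    then have "snd v \<in> nodes n" "C = stack_conn d1 d2 `` {tag_outer (snd v)}"
      using w C(2,3) equiv_class_eq[OF E] outer_vertex[OF d v] by auto
    then show "p \<in> nodes n // outer_rel n d1 d2"
      using p outer_part_of_class[OF d] by (auto intro: quotientI)
  qed
  show "nodes n // outer_rel n d1 d2 \<subseteq> dcomp d1 d2"
  proof
    fix p assume "p \<in> nodes n // outer_rel n d1 d2"
    then obtain u where u: "u \<in> nodes n" "p = outer_rel n d1 d2 `` {u}"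
      by (auto elim: quotientE)
    let ?C = "stack_conn d1 d2 `` {tag_outer u}"
    have "?C \<in> stack_comps d1 d2" "tag_outer u \<in> ?C"
      using tag_outer_in_stack_verts[OF d u(1)] equiv_class_self[OF E]
      by (auto simp: stack_comps_def intro: quotientI)
    then show "p \<in> dcomp d1 d2"
      unfolding dcomp_def using outer_part_of_class[OF d u(1)] u(2) fst_tag_outer by blast
  qed
qed

lemma dcomp_in_Diag: "d1 \<in> Diag n \<Longrightarrow> d2 \<in> Diag n \<Longrightarrow> dcomp d1 d2 \<in> Diag n"
  by (simp add: dcomp_eq_quotient quotient_in_Diag equiv_outer_rel)

lemma block_rel_dcomp: "d1 \<in> Diag n \<Longrightarrow> d2 \<in> Diag n \<Longrightarrow> block_rel (dcomp d1 d2) = outer_rel n d1 d2"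
  by (simp add: dcomp_eq_quotient block_rel_quotient equiv_outer_rel)

text \<open>The map \<open>\<pi>\<close> retracts the stacked picture onto the outer nodes along the blocks of \<open>d\<close>,
  so stacking \<open>t\<close> below \<open>d\<close> creates no new connections.\<close>

lemma dcomp_right_unitI:
  assumes d: "d \<in> Diag n" and t: "t \<in> Diag n"
    and edge: "\<And>p q. (p, q) \<in> stack_rel d t \<Longrightarrow> (\<pi> p, \<pi> q) \<in> block_rel d"
    and retract: "\<And>u. u \<in> nodes n \<Longrightarrow> \<pi> (tag_outer u) = u"
    and block: "\<And>u v. (u, v) \<in> block_rel d \<Longrightarrow> (tag_outer u, tag_outer v) \<in> stack_conn d t"
  shows "dcomp d t = d"
proof (rule Diag_eqI[OF dcomp_in_Diag[OF d t] d])
  have path: "(\<pi> p, \<pi> q) \<in> block_rel d" if "(p, q) \<in> stack_conn d t" for p q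
    using that by (induction rule: trancl_induct) (auto intro: edge block_rel_trans[OF d])
  show "block_rel (dcomp d t) = block_rel d"
  proof (rule set_eqI)
    fix x :: "int \<times> int"
    obtain u v where x: "x = (u, v)" by fastforce
    show "x \<in> block_rel (dcomp d t) \<longleftrightarrow> x \<in> block_rel d"
      unfolding block_rel_dcomp[OF d t] outer_rel_def x
      using path[of "tag_outer u" "tag_outer v"] retract block block_rel_in_nodes[OF d] by auto
  qed
qed

lemma dmid_eq_0I:
  assumes d: "d1 \<in> Diag n" "d2 \<in> Diag n"
    and middle: "\<And>j. 1 \<le> j \<Longrightarrow> j \<le> int n \<Longrightarrow> \<exists>w. fst w \<noteq> 1 \<and> ((1, j), w) \<in> stack_conn d1 d2"
  shows "dmid d1 d2 = 0"
proof -
  have "\<not> (\<forall>v\<in>C. fst v = 1)" if C: "C \<in> stack_comps d1 d2" for C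
  proof
    assume mid: "\<forall>v\<in>C. fst v = 1"
    obtain v where v: "C = stack_conn d1 d2 `` {v}" "v \<in> stack_verts d1 d2"
      using C by (auto simp: stack_comps_def elim: quotientE)
    then have "v \<in> C" using equiv_class_self[OF equiv_stack_conn[OF d]] by simp
    then have "v = (1, snd v)" "1 \<le> snd v" "snd v \<le> int n"
      using mid middle_vertex[OF d v(2)] by auto
    then show False using middle v(1) mid by (metis Image_singleton_iff)
  qed
  then have "{C \<in> stack_comps d1 d2. \<forall>v\<in>C. fst v = 1} = {}" by blast
  then show ?thesis unfolding dmid_def by (simp only: card.empty)
qed

lemma stack_conn_through:
  assumes uv: "(u, v) \<in> block_rel d"
    and through_u: "0 < u \<Longrightarrow> (u, - u) \<in> block_rel t"
    and through_v: "0 < v \<Longrightarrow> (v, - v) \<in> block_rel t"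
    and nonzero: "u \<noteq> 0" "v \<noteq> 0"
  shows "(tag_outer u, tag_outer v) \<in> stack_conn d t"
proof -
  have start: "(tag_outer u, tagL u) \<in> (stack_rel d t)\<^sup>*"
  proof (cases "u < 0")
    case False
    then have "(tagR u, tagR (- u)) \<in> stack_rel d t"
      using through_u nonzero by (intro stack_rel_tagR) auto
    then show ?thesis using False nonzero by (simp add: tag_outer_def tagL_def tagR_def)
  qed (simp add: tag_outer_def tagL_def)
  have finish: "(tagL v, tag_outer v) \<in> (stack_rel d t)\<^sup>*"
  proof (cases "v < 0")
    case False
    then have "(tagR (- v), tagR v) \<in> stack_rel d t"
      using through_v nonzero by (intro stack_rel_tagR) (auto intro: block_rel_sym)
    then show ?thesis using False nonzero by (simp add: tag_outer_def tagL_def tagR_def)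
  qed (simp add: tag_outer_def tagL_def)
  have "(tagL u, tagL v) \<in> stack_rel d t"
    using uv by (rule stack_rel_tagL)
  with start have "(tag_outer u, tagL v) \<in> stack_conn d t"
    by (rule rtrancl_into_trancl1)
  then show ?thesis using finish by (rule trancl_rtrancl_trancl)
qed

lemma stack_conn_middle_right:
  assumes "1 \<le> j" "0 \<le> j'" "(- j, j') \<in> block_rel t"
  shows "((1, j), (2, j')) \<in> stack_conn d t"
proof -
  have "(tagR (- j), tagR j') \<in> stack_rel d t" using assms by (intro stack_rel_tagR)
  then show ?thesis using assms by (simp add: tagR_def r_into_trancl)
qed

section \<open>Right units\<close>

lemma not_perm_diag_pair:
  assumes "B \<in> d" "a \<in> B" "b \<in> B" "0 < a" "0 < b" "a \<noteq> b"
  shows "\<not> is_perm_diag n d"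
proof
  assume "is_perm_diag n d"
  then obtain i j where "1 \<le> i" "B = {- i, j}" using assms(1) unfolding is_perm_diag_def by blast
  then show False using assms by auto
qed

lemma not_perm_diag_singleton:
  assumes "{a} \<in> d" "0 < a"
  shows "\<not> is_perm_diag n d"
proof
  assume "is_perm_diag n d"
  then obtain i j where "1 \<le> i" "{a} = {- i, j}" using assms(1) unfolding is_perm_diag_def by blast
  then have "a = - i" by (metis insertI1 singletonD)
  then show False using assms(2) \<open>1 \<le> i\<close> by simp
qed

definition fibre_rel :: "nat \<Rightarrow> (int \<Rightarrow> int) \<Rightarrow> (int \<times> int) set" where
  "fibre_rel n f = {(u, v). u \<in> nodes n \<and> v \<in> nodes n \<and> f u = f v}"

definition fibre_diag :: "nat \<Rightarrow> (int \<Rightarrow> int) \<Rightarrow> int set set" where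
  "fibre_diag n f = nodes n // fibre_rel n f"

lemma equiv_fibre_rel: "equiv (nodes n) (fibre_rel n f)"
  by (rule equivI) (auto simp: fibre_rel_def refl_on_def sym_def trans_def)

lemma fibre_diag_in_Diag: "fibre_diag n f \<in> Diag n"
  by (simp add: fibre_diag_def quotient_in_Diag equiv_fibre_rel)

lemma block_rel_fibre_diag: "block_rel (fibre_diag n f) = fibre_rel n f"
  by (simp add: fibre_diag_def block_rel_quotient equiv_fibre_rel)

text \<open>The blocks of \<open>join_diag n Y\<close> are \<open>{-u, u}\<close> for \<open>u \<notin> Y\<close> and one block
  containing \<open>\<plusminus>y\<close> for all \<open>y \<in> Y\<close>.\<close>

definition join_diag :: "nat \<Rightarrow> nat set \<Rightarrow> int set set" where
  "join_diag n Y = fibre_diag n (\<lambda>u. if \<bar>u\<bar> \<in> int ` Y then 0 else \<bar>u\<bar>)"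

lemma join_diag_in_Diag: "join_diag n Y \<in> Diag n"
  by (simp add: join_diag_def fibre_diag_in_Diag)

lemma join_diag_has_block:
  assumes "Y \<subseteq> {1..n}" "Y \<noteq> {}"
  shows "\<exists>B\<in>join_diag n Y. int ` Y \<subseteq> B"
proof -
  obtain y0 where y0: "y0 \<in> Y" using assms by blast
  let ?f = "\<lambda>u. if \<bar>u\<bar> \<in> int ` Y then 0 else \<bar>u\<bar>"
  have Y: "int y \<in> nodes n" if "y \<in> Y" for y using that assms(1) by (auto simp: mem_nodes_iff)
  have "fibre_rel n ?f `` {int y0} \<in> join_diag n Y"
    unfolding join_diag_def fibre_diag_def using Y[OF y0] by (rule quotientI)
  moreover have "int ` Y \<subseteq> fibre_rel n ?f `` {int y0}"
    using Y y0 by (auto simp: fibre_rel_def)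
  ultimately show ?thesis by blast
qed

lemma dcomp_join_diag:
  assumes d: "d \<in> Diag n" and B: "B \<in> d" "int ` Y \<subseteq> B"
  shows "dcomp d (join_diag n Y) = d"
proof (rule dcomp_right_unitI[OF d join_diag_in_Diag, where \<pi> = snd])
  let ?f = "\<lambda>u. if \<bar>u\<bar> \<in> int ` Y then 0 else \<bar>u\<bar>"
  have t: "block_rel (join_diag n Y) = fibre_rel n ?f"
    by (simp add: join_diag_def block_rel_fibre_diag)
  have "(\<bar>a\<bar>, \<bar>b\<bar>) \<in> block_rel d" if "(a, b) \<in> fibre_rel n ?f" for a b
  proof (cases "\<bar>a\<bar> \<in> int ` Y")
    case True
    then have "\<bar>b\<bar> \<in> int ` Y"
      using that abs_in_nodes[of b n] by (auto simp: fibre_rel_def split: if_splits)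
    then show ?thesis using True B by (auto simp: block_rel_def)
  next
    case False
    then have "\<bar>b\<bar> = \<bar>a\<bar>"
      using that abs_in_nodes[of a n] by (auto simp: fibre_rel_def split: if_splits)
    then show ?thesis using that block_rel_refl[OF d] abs_in_nodes by (simp add: fibre_rel_def)
  qed
  then show "(snd p, snd q) \<in> block_rel d" if "(p, q) \<in> stack_rel d (join_diag n Y)" for p q
    using that unfolding stack_rel_iff t by (elim disjE exE conjE) (simp_all add: snd_tagL snd_tagR)
  show "snd (tag_outer u) = u" for u by (rule snd_tag_outer)
  show "(tag_outer u, tag_outer v) \<in> stack_conn d (join_diag n Y)" if "(u, v) \<in> block_rel d" for u v
    using block_rel_in_nodes[OF d that]
    by (intro stack_conn_through[OF that]) (auto simp: t fibre_rel_def uminus_in_nodes dest: nodes_nonzero)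
qed

lemma dmid_join_diag:
  assumes d: "d \<in> Diag n"
  shows "dmid d (join_diag n Y) = 0"
proof (rule dmid_eq_0I[OF d join_diag_in_Diag])
  fix j :: int assume j: "1 \<le> j" "j \<le> int n"
  then have "(- j, j) \<in> block_rel (join_diag n Y)"
    by (auto simp: join_diag_def block_rel_fibre_diag fibre_rel_def mem_nodes_iff)
  then show "\<exists>w. fst w \<noteq> 1 \<and> ((1, j), w) \<in> stack_conn d (join_diag n Y)"
    using j stack_conn_middle_right[of j j] by (intro exI[of _ "(2, j)"]) auto
qed


text \<open>In \<open>isolate_diag n x y\<close> the right node \<open>x\<close> is a singleton, the left node \<open>-x\<close> lies in
  the block \<open>{-y, y}\<close>, and every other \<open>u\<close> forms the block \<open>{-u, u}\<close>.\<close>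

definition isolate_diag :: "nat \<Rightarrow> nat \<Rightarrow> nat \<Rightarrow> int set set" where
  "isolate_diag n x y =
     fibre_diag n (\<lambda>u. if u = int x then 0 else if u = - int x then int y else \<bar>u\<bar>)"

lemma isolate_diag_in_Diag: "isolate_diag n x y \<in> Diag n"
  by (simp add: isolate_diag_def fibre_diag_in_Diag)

lemma block_rel_isolate_diag:
  "block_rel (isolate_diag n x y) =
     fibre_rel n (\<lambda>u. if u = int x then 0 else if u = - int x then int y else \<bar>u\<bar>)"
  by (simp add: isolate_diag_def block_rel_fibre_diag)

lemma singleton_in_isolate_diag:
  assumes "x \<in> {1..n}" "y \<in> {1..n}"
  shows "{int x} \<in> isolate_diag n x y"
  using assms abs_in_nodes
  by (auto simp: singleton_in_Diag_iff[OF isolate_diag_in_Diag] block_rel_isolate_diag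
      fibre_rel_def of_nat_in_nodes split: if_splits)

lemma isolate_diag_edge:
  fixes x y :: nat and \<pi> :: "nat \<times> int \<Rightarrow> int"
  defines "\<pi> \<equiv> \<lambda>(k, j). if k = 1 \<and> j = int x then int y else j"
  assumes d: "d \<in> Diag n" and y: "y \<in> {1..n}" and dx: "{int x} \<in> d"
    and pq: "(p, q) \<in> stack_rel d (isolate_diag n x y)"
  shows "(\<pi> p, \<pi> q) \<in> block_rel d"
proof -
  let ?f = "\<lambda>u. if u = int x then 0 else if u = - int x then int y else \<bar>u\<bar>"
  have x_alone: "u = int x \<longleftrightarrow> v = int x" if "(u, v) \<in> block_rel d" for u v
    using that dx block_rel_sym singleton_in_Diag_iff[OF d] by metis
  have f_0: "u = int x" if "u \<in> nodes n" "?f u = 0" for u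
    using that y abs_in_nodes[of u n] by (auto split: if_splits)
  have \<pi>_tagL: "\<pi> (tagL u) = (if u = int x then int y else u)" for u
    by (auto simp: \<pi>_def tagL_def)
  have \<pi>_tagR: "\<pi> (tagR u) = ?f u" if "u \<in> nodes n" "u \<noteq> int x" for u
    using that nodes_nonzero[of u n] by (auto simp: \<pi>_def tagR_def)
  from pq consider a b where "p = tagL a" "q = tagL b" "(a, b) \<in> block_rel d"
    | a b where "p = tagR a" "q = tagR b" "(a, b) \<in> fibre_rel n ?f"
    unfolding stack_rel_iff block_rel_isolate_diag by blast
  then show ?thesis
  proof cases
    case 1
    then show ?thesis
      using x_alone[OF 1(3)] block_rel_refl[OF d of_nat_in_nodes[OF y]] by (auto simp: \<pi>_tagL)
  next
    case 2
    then have ab: "a \<in> nodes n" "b \<in> nodes n" "?f a = ?f b" by (auto simp: fibre_rel_def)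
    show ?thesis
    proof (cases "a = int x \<or> b = int x")
      case True
      then have "a = int x" "b = int x" using ab f_0 by (metis (full_types))+
      then show ?thesis using 2 block_rel_refl[OF d] ab by (simp add: \<pi>_def tagR_of_nat)
    next
      case False
      then have "?f a \<in> nodes n"
        using of_nat_in_nodes[OF y] abs_in_nodes[OF ab(1)] by auto
      then show ?thesis using False 2 ab \<pi>_tagR block_rel_refl[OF d] by simp
    qed
  qed
qed

lemma dcomp_isolate_diag:
  assumes d: "d \<in> Diag n" and x: "x \<in> {1..n}" and y: "y \<in> {1..n}" and dx: "{int x} \<in> d"
  shows "dcomp d (isolate_diag n x y) = d"
proof (rule dcomp_right_unitI[OF d isolate_diag_in_Diag isolate_diag_edge[OF d y dx]])
  show "(\<lambda>(k, j). if k = 1 \<and> j = int x then int y else j) (tag_outer u) = u" for u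
    by (simp add: tag_outer_def)
  fix u v assume uv: "(u, v) \<in> block_rel d"
  have uv_nodes: "u \<in> nodes n" "v \<in> nodes n" using block_rel_in_nodes[OF d uv] by auto
  show "(tag_outer u, tag_outer v) \<in> stack_conn d (isolate_diag n x y)"
  proof (cases "u = int x \<or> v = int x")
    case True
    then have "u = int x" "v = int x"
      using uv dx block_rel_sym singleton_in_Diag_iff[OF d] by metis+
    moreover have "(tagR (int x), tagR (int x)) \<in> stack_rel d (isolate_diag n x y)"
      using of_nat_in_nodes[OF x] by (intro stack_rel_tagR) (simp add: block_rel_isolate_diag fibre_rel_def)
    ultimately show ?thesis by (simp add: tagR_of_nat tag_outer_of_nat r_into_trancl)
  next
    case False
    then show ?thesis
      using uv_nodes uminus_in_nodes nodes_nonzero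
      by (intro stack_conn_through[OF uv]) (auto simp: block_rel_isolate_diag fibre_rel_def)
  qed
qed

lemma dmid_isolate_diag:
  assumes d: "d \<in> Diag n" and x: "x \<in> {1..n}" and y: "y \<in> {1..n}" "y \<noteq> x"
  shows "dmid d (isolate_diag n x y) = 0"
proof (rule dmid_eq_0I[OF d isolate_diag_in_Diag])
  fix j :: int assume j: "1 \<le> j" "j \<le> int n"
  define j' where "j' = (if j = int x then int y else j)"
  have "(- j, j') \<in> block_rel (isolate_diag n x y)"
    using j x y by (auto simp: j'_def block_rel_isolate_diag fibre_rel_def mem_nodes_iff)
  moreover have "0 \<le> j'" using j by (simp add: j'_def)
  ultimately show "\<exists>w. fst w \<noteq> 1 \<and> ((1, j), w) \<in> stack_conn d (isolate_diag n x y)"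
    using j stack_conn_middle_right[of j j'] by (intro exI[of _ "(2, j')"]) auto
qed

definition J_diag :: "nat set \<Rightarrow> int set set \<Rightarrow> bool" where
  "J_diag Z d \<longleftrightarrow>
     (\<exists>z\<in>Z. {int z} \<in> d) \<or> (\<exists>z1\<in>Z. \<exists>z2\<in>Z. z1 \<noteq> z2 \<and> (int z1, int z2) \<in> block_rel d)"

lemma J_mod_eq_dspan: "J_mod n Z = dspan n (J_diag Z)"
  unfolding J_mod_def J_diag_def in_block_rel_iff ..

lemma stack_conn_from_right_singleton:
  assumes d2: "d2 \<in> Diag n" and z: "{int z} \<in> d2" and pq: "((2, int z), q) \<in> stack_conn d1 d2"
  shows "q = (2, int z)"
proof -
  have "q = (2, int z)" if "((2, int z), q) \<in> stack_rel d1 d2" for q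
  proof -
    from that obtain a b where ab: "(2, int z) = tagR a" "q = tagR b" "(a, b) \<in> block_rel d2"
      unfolding stack_rel_iff by (auto simp: tagL_def split: if_splits)
    then have "a = int z" by (auto simp: tagR_def split: if_splits)
    then have "b = int z" using ab(3) singleton_in_Diag_iff[OF d2] z by blast
    then show ?thesis using ab(2) tagR_of_nat by simp
  qed
  with pq show ?thesis by (induction rule: trancl_induct) auto
qed

lemma singleton_in_dcomp:
  assumes d: "d1 \<in> Diag n" "d2 \<in> Diag n" and z: "{int z} \<in> d2"
  shows "{int z} \<in> dcomp d1 d2"
proof -
  have "v = int z" if "(int z, v) \<in> block_rel (dcomp d1 d2)" for v
  proof -
    have "(tag_outer (int z), tag_outer v) \<in> stack_conn d1 d2"
      using that by (simp add: block_rel_dcomp[OF d] outer_rel_def)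
    then have "tag_outer v = tag_outer (int z)"
      using stack_conn_from_right_singleton[OF d(2) z] tag_outer_of_nat by metis
    then show ?thesis using inj_tag_outer by (simp add: inj_eq)
  qed
  moreover have "int z \<in> nodes n" using z singleton_in_Diag_iff[OF d(2)] by blast
  ultimately show ?thesis using singleton_in_Diag_iff[OF dcomp_in_Diag[OF d]] by blast
qed

lemma block_rel_right_in_dcomp:
  assumes d: "d1 \<in> Diag n" "d2 \<in> Diag n" and z: "(int z1, int z2) \<in> block_rel d2"
  shows "(int z1, int z2) \<in> block_rel (dcomp d1 d2)"
proof -
  have "(tag_outer (int z1), tag_outer (int z2)) \<in> stack_conn d1 d2"
    using stack_rel_tagR[OF z] by (simp add: tagR_of_nat tag_outer_of_nat r_into_trancl)
  then show ?thesis using block_rel_in_nodes[OF d(2) z] by (simp add: block_rel_dcomp[OF d] outer_rel_def)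
qed

lemma J_diag_dcomp: "d1 \<in> Diag n \<Longrightarrow> d2 \<in> Diag n \<Longrightarrow> J_diag Z d2 \<Longrightarrow> J_diag Z (dcomp d1 d2)"
  unfolding J_diag_def using singleton_in_dcomp block_rel_right_in_dcomp by metis

section \<open>Merging the blocks that meet \<open>Y\<close>\<close>

definition meets :: "int set set \<Rightarrow> nat set \<Rightarrow> int \<Rightarrow> bool" where
  "meets d Y u \<longleftrightarrow> (\<exists>y\<in>Y. (u, int y) \<in> block_rel d)"

definition merge_rel :: "nat \<Rightarrow> nat set \<Rightarrow> int set set \<Rightarrow> (int \<times> int) set" where
  "merge_rel n Y d =
     {(u, v). u \<in> nodes n \<and> v \<in> nodes n \<and> ((u, v) \<in> block_rel d \<or> meets d Y u \<and> meets d Y v)}"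

definition merge_diag :: "nat \<Rightarrow> nat set \<Rightarrow> int set set \<Rightarrow> int set set" where
  "merge_diag n Y d = nodes n // merge_rel n Y d"

lemma equiv_merge_rel:
  assumes d: "d \<in> Diag n"
  shows "equiv (nodes n) (merge_rel n Y d)"
proof (rule equivI)
  show "merge_rel n Y d \<subseteq> nodes n \<times> nodes n" by (auto simp: merge_rel_def)
  show "refl_on (nodes n) (merge_rel n Y d)"
    by (auto simp: refl_on_def merge_rel_def intro: block_rel_refl[OF d])
  show "sym (merge_rel n Y d)"
    by (rule symI) (auto simp: merge_rel_def intro: block_rel_sym)
  have "meets d Y u" if "(u, v) \<in> block_rel d" "meets d Y v" for u v
    using that block_rel_trans[OF d] unfolding meets_def by blast
  then show "trans (merge_rel n Y d)"
    unfolding trans_def merge_rel_def using block_rel_trans[OF d] block_rel_sym by blast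
qed

lemma merge_diag_in_Diag: "d \<in> Diag n \<Longrightarrow> merge_diag n Y d \<in> Diag n"
  by (simp add: merge_diag_def quotient_in_Diag equiv_merge_rel)

lemma block_rel_merge_diag: "d \<in> Diag n \<Longrightarrow> block_rel (merge_diag n Y d) = merge_rel n Y d"
  by (simp add: merge_diag_def block_rel_quotient equiv_merge_rel)

lemma block_rel_subset_merge_rel: "d \<in> Diag n \<Longrightarrow> block_rel d \<subseteq> merge_rel n Y d"
  using block_rel_in_nodes by (fastforce simp: merge_rel_def)

lemma stack_conn_subset_merge_diag: "d \<in> Diag n \<Longrightarrow> stack_conn a d \<subseteq> stack_conn a (merge_diag n Y d)"
  by (intro trancl_mono_subset stack_rel_mono_right)
    (simp add: block_rel_merge_diag block_rel_subset_merge_rel)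

lemma stack_rel_merge_diag:
  assumes d: "d \<in> Diag n" and pq: "(p, q) \<in> stack_rel a (merge_diag n Y d)"
  shows "(p, q) \<in> stack_rel a d \<or>
    (\<exists>y\<in>Y. (p, (2, int y)) \<in> stack_rel a d) \<and> (\<exists>y\<in>Y. ((2, int y), q) \<in> stack_rel a d)"
proof -
  from pq consider "(p, q) \<in> stack_rel a d"
    | u v where "p = tagR u" "q = tagR v" "meets d Y u" "meets d Y v"
    unfolding stack_rel_iff block_rel_merge_diag[OF d] merge_rel_def by blast
  then show ?thesis
  proof cases
    case 2
    then obtain y1 y2 where "y1 \<in> Y" "y2 \<in> Y" "(u, int y1) \<in> block_rel d" "(int y2, v) \<in> block_rel d"
      unfolding meets_def using block_rel_sym by blast
    then show ?thesis using 2 stack_rel_tagR tagR_of_nat by metis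
  qed simp
qed

lemma stack_conn_merge_diag:
  assumes d: "d \<in> Diag n" and pq: "(p, q) \<in> stack_conn a (merge_diag n Y d)"
  shows "(p, q) \<in> stack_conn a d \<or>
    (\<exists>y\<in>Y. (p, (2, int y)) \<in> stack_conn a d) \<and> (\<exists>y\<in>Y. ((2, int y), q) \<in> stack_conn a d)"
  using pq
proof (induction rule: trancl_induct)
  case (base q)
  then show ?case using stack_rel_merge_diag[OF d] by blast
next
  case (step q r)
  from stack_rel_merge_diag[OF d step(2)] step(3) show ?case
    by (meson r_into_trancl trancl.trancl_into_trancl)
qed

lemma meets_dcomp:
  assumes d: "a \<in> Diag n" "d \<in> Diag n" and Y: "Y \<subseteq> {1..n}"
  shows "meets (dcomp a d) Y u \<longleftrightarrow> u \<in> nodes n \<and> (\<exists>y\<in>Y. (tag_outer u, (2, int y)) \<in> stack_conn a d)"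
proof -
  have "int y \<in> nodes n" if "y \<in> Y" for y using that Y by (auto simp: mem_nodes_iff)
  then show ?thesis
    unfolding meets_def block_rel_dcomp[OF d] outer_rel_def by (auto simp: tag_outer_of_nat)
qed

lemma outer_rel_merge_diag_subset:
  assumes d: "a \<in> Diag n" "d \<in> Diag n" and Y: "Y \<subseteq> {1..n}"
  shows "outer_rel n a (merge_diag n Y d) \<subseteq> merge_rel n Y (dcomp a d)"
proof (rule subrelI)
  fix u v assume "(u, v) \<in> outer_rel n a (merge_diag n Y d)"
  then have uv: "u \<in> nodes n" "v \<in> nodes n"
    "(tag_outer u, tag_outer v) \<in> stack_conn a (merge_diag n Y d)"
    by (auto simp: outer_rel_def)
  from stack_conn_merge_diag[OF d(2) uv(3)] show "(u, v) \<in> merge_rel n Y (dcomp a d)"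
  proof
    assume "(tag_outer u, tag_outer v) \<in> stack_conn a d"
    then show ?thesis using uv by (auto simp: merge_rel_def block_rel_dcomp[OF d] outer_rel_def)
  next
    assume "(\<exists>y\<in>Y. (tag_outer u, (2, int y)) \<in> stack_conn a d) \<and>
      (\<exists>y\<in>Y. ((2, int y), tag_outer v) \<in> stack_conn a d)"
    then have "meets (dcomp a d) Y u" "meets (dcomp a d) Y v"
      using meets_dcomp[OF d Y] uv stack_conn_sym by blast+
    then show ?thesis using uv by (auto simp: merge_rel_def)
  qed
qed

lemma merge_rel_dcomp_subset:
  assumes d: "a \<in> Diag n" "d \<in> Diag n" and Y: "Y \<subseteq> {1..n}"
  shows "merge_rel n Y (dcomp a d) \<subseteq> outer_rel n a (merge_diag n Y d)"
proof (rule subrelI)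
  fix u v assume uv: "(u, v) \<in> merge_rel n Y (dcomp a d)"
  note mono = stack_conn_subset_merge_diag[OF d(2), of a Y]
  from uv consider "(u, v) \<in> block_rel (dcomp a d)"
    | "meets (dcomp a d) Y u" "meets (dcomp a d) Y v"
    by (auto simp: merge_rel_def)
  then show "(u, v) \<in> outer_rel n a (merge_diag n Y d)"
  proof cases
    case 1
    then show ?thesis using mono by (auto simp: block_rel_dcomp[OF d] outer_rel_def)
  next
    case 2
    then obtain y1 y2 where y: "y1 \<in> Y" "y2 \<in> Y" "(tag_outer u, (2, int y1)) \<in> stack_conn a d"
      "(tag_outer v, (2, int y2)) \<in> stack_conn a d" and uv_nodes: "u \<in> nodes n" "v \<in> nodes n"
      using meets_dcomp[OF d Y] by blast
    have "int y1 \<in> nodes n" "int y2 \<in> nodes n" using y(1,2) Y by (auto simp: mem_nodes_iff)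
    then have "meets d Y (int y1)" "meets d Y (int y2)"
      using y(1,2) block_rel_refl[OF d(2)] by (auto simp: meets_def)
    then have "(int y1, int y2) \<in> merge_rel n Y d"
      using \<open>int y1 \<in> nodes n\<close> \<open>int y2 \<in> nodes n\<close> by (simp add: merge_rel_def)
    then have "((2, int y1), (2, int y2)) \<in> stack_conn a (merge_diag n Y d)"
      using stack_rel_tagR[of "int y1" "int y2" "merge_diag n Y d" a]
      by (simp add: block_rel_merge_diag[OF d(2)] tagR_of_nat r_into_trancl)
    moreover have "(tag_outer u, (2, int y1)) \<in> stack_conn a (merge_diag n Y d)"
      "((2, int y2), tag_outer v) \<in> stack_conn a (merge_diag n Y d)"
      using y mono stack_conn_sym by blast+
    ultimately show ?thesis using uv_nodes by (auto simp: outer_rel_def intro: trancl_trans)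
  qed
qed

lemma dcomp_merge_diag:
  assumes d: "a \<in> Diag n" "d \<in> Diag n" and Y: "Y \<subseteq> {1..n}"
  shows "dcomp a (merge_diag n Y d) = merge_diag n Y (dcomp a d)"
proof (rule Diag_eqI)
  show "dcomp a (merge_diag n Y d) \<in> Diag n" "merge_diag n Y (dcomp a d) \<in> Diag n"
    by (simp_all add: d dcomp_in_Diag merge_diag_in_Diag)
  show "block_rel (dcomp a (merge_diag n Y d)) = block_rel (merge_diag n Y (dcomp a d))"
    using outer_rel_merge_diag_subset[OF d Y] merge_rel_dcomp_subset[OF d Y]
    by (simp add: block_rel_dcomp[OF d(1) merge_diag_in_Diag[OF d(2)]]
        block_rel_merge_diag[OF dcomp_in_Diag[OF d]])
qed

text \<open>Merging only adds paths through right nodes of \<open>d\<close>, so it leaves alone the components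
  that consist of middle nodes only.\<close>

lemma stack_conn_merge_diag_middle_class:
  assumes d: "d \<in> Diag n" and middle: "\<forall>w. (v, w) \<in> stack_conn a d \<longrightarrow> fst w = 1"
  shows "stack_conn a (merge_diag n Y d) `` {v} = stack_conn a d `` {v}"
proof
  show "stack_conn a (merge_diag n Y d) `` {v} \<subseteq> stack_conn a d `` {v}"
    using stack_conn_merge_diag[OF d] middle by fastforce
  show "stack_conn a d `` {v} \<subseteq> stack_conn a (merge_diag n Y d) `` {v}"
    using stack_conn_subset_merge_diag[OF d] by blast
qed

lemma dmid_merge_diag:
  assumes d: "a \<in> Diag n" "d \<in> Diag n"
  shows "dmid a (merge_diag n Y d) = dmid a d"
proof -
  have V: "stack_verts a (merge_diag n Y d) = stack_verts a d"
    by (simp add: stack_verts_eq[OF d(1) merge_diag_in_Diag[OF d(2)]] stack_verts_eq[OF d])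
  have "C \<in> stack_comps a (merge_diag n Y d) \<longleftrightarrow> C \<in> stack_comps a d"
    if middle: "\<forall>v\<in>C. fst v = 1" for C
  proof -
    have "stack_conn a (merge_diag n Y d) `` {v} = stack_conn a d `` {v}"
      if "C = stack_conn a (merge_diag n Y d) `` {v} \<or> C = stack_conn a d `` {v}" for v
      using that middle stack_conn_subset_merge_diag[OF d(2), of a Y]
      by (intro stack_conn_merge_diag_middle_class[OF d(2)]) blast
    then show ?thesis unfolding stack_comps_def V quotient_def by blast
  qed
  then have "{C \<in> stack_comps a (merge_diag n Y d). \<forall>v\<in>C. fst v = 1} =
      {C \<in> stack_comps a d. \<forall>v\<in>C. fst v = 1}"
    by blast
  then show ?thesis by (simp add: dmid_def)
qed

lemma merge_diag_has_block:
  assumes d: "d \<in> Diag n" and Y: "Y \<subseteq> {1..n}" "Y \<noteq> {}"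
  shows "\<exists>B\<in>merge_diag n Y d. int ` Y \<subseteq> B"
proof -
  obtain y0 where y0: "y0 \<in> Y" using Y by blast
  have Y_nodes: "int y \<in> nodes n" if "y \<in> Y" for y using that Y by (auto simp: mem_nodes_iff)
  have "merge_rel n Y d `` {int y0} \<in> merge_diag n Y d"
    unfolding merge_diag_def using Y_nodes[OF y0] by (rule quotientI)
  moreover have "int ` Y \<subseteq> merge_rel n Y d `` {int y0}"
    using Y_nodes y0 block_rel_refl[OF d] by (auto simp: merge_rel_def meets_def)
  ultimately show ?thesis by blast
qed

lemma merge_diag_eq_self:
  assumes d: "d \<in> Diag n" and B: "B \<in> d" "int ` Y \<subseteq> B"
  shows "merge_diag n Y d = d"
proof (rule Diag_eqI[OF merge_diag_in_Diag[OF d] d])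
  have "(u, v) \<in> block_rel d" if uv: "meets d Y u" "meets d Y v" for u v
  proof -
    obtain y1 y2 where y: "y1 \<in> Y" "y2 \<in> Y" "(u, int y1) \<in> block_rel d" "(v, int y2) \<in> block_rel d"
      using uv by (auto simp: meets_def)
    moreover have "(int y1, int y2) \<in> block_rel d" using B y(1,2) by (auto simp: block_rel_def)
    ultimately show ?thesis using block_rel_trans[OF d] block_rel_sym by blast
  qed
  then have "merge_rel n Y d \<subseteq> block_rel d" by (auto simp: merge_rel_def)
  then show "block_rel (merge_diag n Y d) = block_rel d"
    using block_rel_subset_merge_rel[OF d] block_rel_merge_diag[OF d] by blast
qed

lemma J_diag_merge_diag:
  assumes d: "d \<in> Diag n" and ZY: "Z \<inter> Y = {}" and J: "J_diag Z d"
  shows "J_diag Z (merge_diag n Y d)"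
proof -
  have "{int z} \<in> merge_diag n Y d" if z: "z \<in> Z" "{int z} \<in> d" for z
  proof -
    have alone: "\<forall>v. (int z, v) \<in> block_rel d \<longrightarrow> v = int z" and "int z \<in> nodes n"
      using z singleton_in_Diag_iff[OF d] by auto
    moreover have "\<not> meets d Y (int z)"
      using alone z(1) ZY unfolding meets_def by (metis disjoint_iff of_nat_eq_iff)
    ultimately show ?thesis
      by (auto simp: singleton_in_Diag_iff[OF merge_diag_in_Diag[OF d]]
          block_rel_merge_diag[OF d] merge_rel_def)
  qed
  then show ?thesis
    using J block_rel_subset_merge_rel[OF d] unfolding J_diag_def block_rel_merge_diag[OF d] by blast
qed

section \<open>Linear algebra in the diagram basis\<close>

definition diag_basis :: "int set set \<Rightarrow> int set set \<Rightarrow> 'a::comm_ring_1" where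
  "diag_basis d = (\<lambda>d'. if d' = d then 1 else 0)"

lemma pmult_eq_double_sum:
  "pmult n \<delta> f g = (\<lambda>x. \<Sum>d1\<in>Diag n. \<Sum>d2\<in>Diag n.
      if dcomp d1 d2 = x then f d1 * g d2 * \<delta> ^ dmid d1 d2 else 0)"
proof (rule ext)
  fix x
  have "{(d1, d2). d1 \<in> Diag n \<and> d2 \<in> Diag n \<and> dcomp d1 d2 = x}
        = {p \<in> Diag n \<times> Diag n. dcomp (fst p) (snd p) = x}" by auto
  then have "pmult n \<delta> f g x = (\<Sum>p\<in>{p \<in> Diag n \<times> Diag n. dcomp (fst p) (snd p) = x}.
          f (fst p) * g (snd p) * \<delta> ^ dmid (fst p) (snd p))"
    unfolding pmult_def by (intro sum.cong) auto
  also have "\<dots> = (\<Sum>p\<in>Diag n \<times> Diag n. if dcomp (fst p) (snd p) = x then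
          f (fst p) * g (snd p) * \<delta> ^ dmid (fst p) (snd p) else 0)"
    by (rule sum.inter_filter) (simp add: finite_Diag)
  finally show "pmult n \<delta> f g x = (\<Sum>d1\<in>Diag n. \<Sum>d2\<in>Diag n.
      if dcomp d1 d2 = x then f d1 * g d2 * \<delta> ^ dmid d1 d2 else 0)"
    by (simp add: sum.cartesian_product split_def)
qed

lemma pmult_diag_basis:
  assumes d: "d \<in> Diag n" and t: "t \<in> Diag n"
  shows "pmult n \<delta> (diag_basis d) (diag_basis t) = pscal (\<delta> ^ dmid d t) (diag_basis (dcomp d t))"
proof (rule ext)
  fix x
  have "pmult n \<delta> (diag_basis d) (diag_basis t) x = (\<Sum>d1\<in>Diag n. \<Sum>d2\<in>Diag n.
      if d1 = d then (if d2 = t then (if dcomp d1 d2 = x then \<delta> ^ dmid d1 d2 else 0) else 0) else 0)"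
    unfolding pmult_eq_double_sum by (intro sum.cong refl) (auto simp: diag_basis_def)
  also have "\<dots> = (\<Sum>d1\<in>Diag n. if d1 = d then (if dcomp d1 t = x then \<delta> ^ dmid d1 t else 0) else 0)"
    by (rule sum.cong[OF refl]) (simp add: sum.delta[OF finite_Diag] t)
  also have "\<dots> = (if dcomp d t = x then \<delta> ^ dmid d t else 0)"
    by (simp add: sum.delta[OF finite_Diag] d)
  finally show "pmult n \<delta> (diag_basis d) (diag_basis t) x =
      pscal (\<delta> ^ dmid d t) (diag_basis (dcomp d t)) x"
    by (auto simp: pscal_def diag_basis_def)
qed

lemma eps_diag_basis: "\<not> is_perm_diag n d \<Longrightarrow> eps n (diag_basis d) = 0"
  unfolding eps_def by (intro sum.neutral) (auto simp: diag_basis_def)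

lemma diag_basis_in_dspan: "d \<in> Diag n \<Longrightarrow> P d \<Longrightarrow> diag_basis d \<in> dspan n P"
  by (auto simp: dspan_def PA_def diag_basis_def)

lemma pzero_in_dspan: "pzero \<in> dspan n P"
  by (simp add: dspan_def PA_def pzero_def)

lemma padd_in_dspan: "u \<in> dspan n P \<Longrightarrow> v \<in> dspan n P \<Longrightarrow> padd u v \<in> dspan n P"
  by (auto simp: dspan_def PA_def padd_def) (metis add.right_neutral)

lemma pscal_in_dspan: "u \<in> dspan n P \<Longrightarrow> pscal r u \<in> dspan n P"
  by (auto simp: dspan_def PA_def pscal_def) (metis mult_zero_right)

lemma dspan_expansion:
  assumes f: "f \<in> dspan n P"
  shows "f = (\<lambda>x. \<Sum>d\<in>{d \<in> Diag n. P d}. f d * diag_basis d x)"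
proof (rule ext)
  fix x
  have "(\<Sum>d\<in>{d \<in> Diag n. P d}. f d * diag_basis d x) = (if x \<in> {d \<in> Diag n. P d} then f x else 0)"
    by (simp add: diag_basis_def finite_Diag if_distrib cong: if_cong)
  also have "\<dots> = f x" using f by (auto simp: dspan_def PA_def)
  finally show "f x = (\<Sum>d\<in>{d \<in> Diag n. P d}. f d * diag_basis d x)" by simp
qed

lemma rsubmod_sum:
  assumes V: "rsubmod n V" and F: "finite F" and g: "\<forall>d\<in>F. g d \<in> V"
  shows "(\<lambda>x. \<Sum>d\<in>F. c d * g d x) \<in> V"
  using F g
proof (induction F rule: finite_induct)
  case empty
  then show ?case using V by (simp add: rsubmod_def pzero_def)
next
  case (insert a F)
  then have "(\<lambda>x. \<Sum>d\<in>insert a F. c d * g d x) = padd (pscal (c a) (g a)) (\<lambda>x. \<Sum>d\<in>F. c d * g d x)"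
    by (auto simp: padd_def pscal_def)
  then show ?case using V insert by (auto simp: rsubmod_def)
qed

lemma triv_tensor_quot_zeroI:
  assumes unit: "\<And>d. d \<in> Diag n \<Longrightarrow> P d \<Longrightarrow>
      \<not> is_perm_diag n d \<and> (\<exists>t\<in>Diag n. P t \<and> dcomp d t = d \<and> dmid d t = 0)"
    and N: "pzero \<in> N"
  shows "triv_tensor_quot_zero n \<delta> (dspan n P :: (int set set \<Rightarrow> 'a::comm_ring_1) set) N"
  unfolding triv_tensor_quot_zero_def
proof
  fix m :: "int set set \<Rightarrow> 'a" assume m: "m \<in> dspan n P"
  let ?S = "{pdiff (pmult n \<delta> a m) (pscal (eps n a) m) | a m.
    a \<in> PA n \<and> m \<in> (dspan n P :: (int set set \<Rightarrow> 'a) set)}"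
  have "diag_basis d \<in> ?S" if d: "d \<in> Diag n" "P d" for d
  proof -
    obtain t where t: "t \<in> Diag n" "P t" "dcomp d t = d" "dmid d t = 0" and "\<not> is_perm_diag n d"
      using unit d by blast
    then have "diag_basis d = pdiff (pmult n \<delta> (diag_basis d) (diag_basis t))
        (pscal (eps n (diag_basis d)) (diag_basis t))"
      using d by (auto simp: pmult_diag_basis eps_diag_basis pdiff_def pscal_def)
    moreover have "diag_basis d \<in> PA n" using d by (auto simp: PA_def diag_basis_def)
    ultimately show ?thesis using t diag_basis_in_dspan by blast
  qed
  then have "m \<in> V" if V: "rsubmod n V" "?S \<subseteq> V" for V
    using rsubmod_sum[OF V(1) _, of "{d \<in> Diag n. P d}" diag_basis m] dspan_expansion[OF m] V(2)
    by (simp add: finite_Diag subset_iff)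
  then have "m \<in> rspan n ?S" unfolding rspan_def by blast
  moreover have "m = padd pzero m" by (simp add: padd_def pzero_def)
  ultimately show "m \<in> setplus N (rspan n ?S)" using N unfolding setplus_def by blast
qed

lemma pmult_in_PA: "pmult n \<delta> a c \<in> PA n"
  unfolding PA_def pmult_eq_double_sum by (auto intro!: sum.neutral simp: dcomp_in_Diag)

lemma left_submod_dspan:
  assumes closed: "\<And>d1 d2. d1 \<in> Diag n \<Longrightarrow> d2 \<in> Diag n \<Longrightarrow> P d2 \<Longrightarrow> P (dcomp d1 d2)"
  shows "left_submod n \<delta> (dspan n P)"
  unfolding left_submod_def rsubmod_def
proof (intro conjI ballI allI)
  show "dspan n P \<subseteq> PA n" by (auto simp: dspan_def)
  fix a c :: "int set set \<Rightarrow> 'a" assume c: "c \<in> dspan n P"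
  have "pmult n \<delta> a c x = 0" if x: "\<not> P x" for x
    unfolding pmult_eq_double_sum
  proof (intro sum.neutral ballI)
    fix d1 d2 assume d: "d1 \<in> Diag n" "d2 \<in> Diag n"
    show "(if dcomp d1 d2 = x then a d1 * c d2 * \<delta> ^ dmid d1 d2 else 0) = 0"
      using c closed[OF d] x by (cases "c d2 = 0") (auto simp: dspan_def)
  qed
  then show "pmult n \<delta> a c \<in> dspan n P"
    using pmult_in_PA by (auto simp: dspan_def)
qed (auto intro: pzero_in_dspan padd_in_dspan pscal_in_dspan)

definition push_diag ::
  "nat \<Rightarrow> (int set set \<Rightarrow> int set set) \<Rightarrow> (int set set \<Rightarrow> 'a::comm_ring_1) \<Rightarrow> int set set \<Rightarrow> 'a" where
  "push_diag n \<phi> f = (\<lambda>d'. \<Sum>d\<in>Diag n. if \<phi> d = d' then f d else 0)"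

lemma push_diag_nonzero:
  assumes "push_diag n \<phi> f d' \<noteq> 0"
  shows "\<exists>d\<in>Diag n. \<phi> d = d' \<and> f d \<noteq> 0"
proof (rule ccontr)
  assume "\<not> ?thesis"
  then have "push_diag n \<phi> f d' = 0" unfolding push_diag_def by (intro sum.neutral) auto
  with assms show False by simp
qed

lemma push_diag_in_dspan:
  assumes "\<And>d. d \<in> Diag n \<Longrightarrow> f d \<noteq> 0 \<Longrightarrow> \<phi> d \<in> Diag n \<and> P (\<phi> d)"
  shows "push_diag n \<phi> f \<in> dspan n P"
proof -
  have "d' \<in> Diag n \<and> P d'" if "push_diag n \<phi> f d' \<noteq> 0" for d'
    using push_diag_nonzero[OF that] assms by blast
  then show ?thesis by (auto simp: dspan_def PA_def)
qed

lemma push_diag_padd: "push_diag n \<phi> (padd f g) = padd (push_diag n \<phi> f) (push_diag n \<phi> g)"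
  and push_diag_pdiff: "push_diag n \<phi> (pdiff f g) = pdiff (push_diag n \<phi> f) (push_diag n \<phi> g)"
  and push_diag_pscal: "push_diag n \<phi> (pscal r f) = pscal r (push_diag n \<phi> f)"
  and push_diag_pzero: "push_diag n \<phi> pzero = pzero"
  unfolding push_diag_def padd_def pdiff_def pscal_def pzero_def
  by (simp_all only: sum.distrib[symmetric] sum_subtractf[symmetric] sum_distrib_left)
    (auto intro!: ext sum.cong)

lemma push_diag_eq_self:
  assumes f: "f \<in> dspan n P" and id_on: "\<And>d. d \<in> Diag n \<Longrightarrow> P d \<Longrightarrow> \<phi> d = d"
  shows "push_diag n \<phi> f = f"
proof (rule ext)
  fix x
  have "push_diag n \<phi> f x = (\<Sum>d\<in>Diag n. if d = x then f d else 0)"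
    unfolding push_diag_def
  proof (intro sum.cong refl)
    fix d assume "d \<in> Diag n"
    then show "(if \<phi> d = x then f d else 0) = (if d = x then f d else 0)"
      using f id_on by (cases "f d = 0") (auto simp: dspan_def)
  qed
  also have "\<dots> = f x" using f by (auto simp: finite_Diag dspan_def PA_def)
  finally show "push_diag n \<phi> f x = f x" .
qed

lemma push_diag_pmult_eq_sum:
  "push_diag n \<phi> (pmult n \<delta> a c) x = (\<Sum>d1\<in>Diag n. \<Sum>d2\<in>Diag n.
     if \<phi> (dcomp d1 d2) = x then a d1 * c d2 * \<delta> ^ dmid d1 d2 else 0)"
proof -
  let ?D = "Diag n" and ?F = "\<lambda>d1 d2. a d1 * c d2 * \<delta> ^ dmid d1 d2"
  have "push_diag n \<phi> (pmult n \<delta> a c) x = (\<Sum>d\<in>?D. \<Sum>d1\<in>?D. \<Sum>d2\<in>?D.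
      if dcomp d1 d2 = d then (if \<phi> d = x then ?F d1 d2 else 0) else 0)"
    unfolding push_diag_def pmult_eq_double_sum
  proof (rule sum.cong[OF refl])
    fix d show "(if \<phi> d = x then (\<Sum>d1\<in>?D. \<Sum>d2\<in>?D.
        if dcomp d1 d2 = d then ?F d1 d2 else 0) else 0) = (\<Sum>d1\<in>?D. \<Sum>d2\<in>?D.
        if dcomp d1 d2 = d then (if \<phi> d = x then ?F d1 d2 else 0) else 0)"
      by (cases "\<phi> d = x") (simp_all cong: if_cong)
  qed
  also have "\<dots> = (\<Sum>d1\<in>?D. \<Sum>d\<in>?D. \<Sum>d2\<in>?D.
      if dcomp d1 d2 = d then (if \<phi> d = x then ?F d1 d2 else 0) else 0)"
    by (rule sum.swap)
  also have "\<dots> = (\<Sum>d1\<in>?D. \<Sum>d2\<in>?D. \<Sum>d\<in>?D.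
      if dcomp d1 d2 = d then (if \<phi> d = x then ?F d1 d2 else 0) else 0)"
    by (rule sum.cong[OF refl], rule sum.swap)
  also have "\<dots> = (\<Sum>d1\<in>?D. \<Sum>d2\<in>?D. if \<phi> (dcomp d1 d2) = x then ?F d1 d2 else 0)"
    by (intro sum.cong refl) (simp add: finite_Diag dcomp_in_Diag)
  finally show ?thesis .
qed

lemma pmult_push_diag_eq_sum:
  assumes \<phi>: "\<And>d. d \<in> Diag n \<Longrightarrow> \<phi> d \<in> Diag n"
  shows "pmult n \<delta> a (push_diag n \<phi> c) x = (\<Sum>d1\<in>Diag n. \<Sum>d2\<in>Diag n.
     if dcomp d1 (\<phi> d2) = x then a d1 * c d2 * \<delta> ^ dmid d1 (\<phi> d2) else 0)"
proof -
  let ?D = "Diag n" and ?G = "\<lambda>d1 d2 e. if dcomp d1 e = x then a d1 * c d2 * \<delta> ^ dmid d1 e else 0"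
  have "(\<Sum>d1\<in>?D. \<Sum>d2\<in>?D. ?G d1 d2 (\<phi> d2)) =
      (\<Sum>d1\<in>?D. \<Sum>d2\<in>?D. \<Sum>e\<in>?D. if \<phi> d2 = e then ?G d1 d2 e else 0)"
    by (intro sum.cong refl) (simp add: finite_Diag \<phi>)
  also have "\<dots> = (\<Sum>d1\<in>?D. \<Sum>e\<in>?D. \<Sum>d2\<in>?D. if \<phi> d2 = e then ?G d1 d2 e else 0)"
    by (rule sum.cong[OF refl], rule sum.swap)
  also have "\<dots> = pmult n \<delta> a (push_diag n \<phi> c) x"
    unfolding pmult_eq_double_sum push_diag_def
  proof (intro sum.cong refl)
    fix d1 e
    show "(\<Sum>d2\<in>?D. if \<phi> d2 = e then ?G d1 d2 e else 0) = (if dcomp d1 e = x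
        then a d1 * (\<Sum>d\<in>?D. if \<phi> d = e then c d else 0) * \<delta> ^ dmid d1 e else 0)"
      by (cases "dcomp d1 e = x")
        (simp_all add: sum_distrib_left sum_distrib_right if_distrib if_distribR cong: if_cong)
  qed
  finally show ?thesis by simp
qed

lemma push_diag_pmult:
  assumes \<phi>: "\<And>d. d \<in> Diag n \<Longrightarrow> \<phi> d \<in> Diag n"
    and comm: "\<And>a d. a \<in> Diag n \<Longrightarrow> d \<in> Diag n \<Longrightarrow> dcomp a (\<phi> d) = \<phi> (dcomp a d)"
    and loops: "\<And>a d. a \<in> Diag n \<Longrightarrow> d \<in> Diag n \<Longrightarrow> dmid a (\<phi> d) = dmid a d"
  shows "push_diag n \<phi> (pmult n \<delta> a c) = pmult n \<delta> a (push_diag n \<phi> c)"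
  by (rule ext) (auto simp: push_diag_pmult_eq_sum pmult_push_diag_eq_sum comm loops \<phi>
      intro!: sum.cong)

definition M_diag :: "nat set \<Rightarrow> int set set \<Rightarrow> bool" where
  "M_diag Y d \<longleftrightarrow> (\<exists>B\<in>d. int ` Y \<subseteq> B)"

lemma M_mod_eq_dspan: "M_mod n Y = dspan n (M_diag Y)"
  unfolding M_mod_def M_diag_def ..

lemma padd_in_PA: "u \<in> PA n \<Longrightarrow> v \<in> PA n \<Longrightarrow> padd u v \<in> PA n"
  and pscal_in_PA: "u \<in> PA n \<Longrightarrow> pscal r u \<in> PA n"
  and pzero_in_PA: "pzero \<in> PA n"
  by (simp_all add: PA_def padd_def pscal_def pzero_def)

lemma left_submod_push_diag_preimage:
  assumes N: "left_submod n \<delta> N"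
    and push_pmult: "\<And>a c. push_diag n \<phi> (pmult n \<delta> a c) = pmult n \<delta> a (push_diag n \<phi> c)"
  shows "left_submod n \<delta> {c \<in> PA n. push_diag n \<phi> c \<in> N}"
  using N unfolding left_submod_def rsubmod_def
  by (auto simp: push_diag_padd push_diag_pscal push_diag_pzero push_pmult pmult_in_PA
      padd_in_PA pscal_in_PA pzero_in_PA)

lemma direct_summand_quot_M_mod:
  assumes YX: "Y \<subseteq> X" and X: "X \<subseteq> {1..n}" and Y: "Y \<noteq> {}"
  shows "direct_summand_quot n \<delta> (M_mod n Y :: (int set set \<Rightarrow> 'a::comm_ring_1) set) (J_mod n (X - Y))"
proof -
  let ?\<Phi> = "push_diag n (merge_diag n Y) :: (int set set \<Rightarrow> 'a) \<Rightarrow> _"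
  let ?J = "dspan n (J_diag (X - Y)) :: (int set set \<Rightarrow> 'a) set"
  let ?M = "dspan n (M_diag Y) :: (int set set \<Rightarrow> 'a) set"
  define C where "C = {c \<in> PA n. ?\<Phi> c \<in> ?J}"
  have Yn: "Y \<subseteq> {1..n}" using YX X by blast
  have \<Phi>_M: "?\<Phi> f \<in> ?M" for f
    by (rule push_diag_in_dspan) (simp add: merge_diag_in_Diag merge_diag_has_block[OF _ Yn Y] M_diag_def)
  have \<Phi>_id: "?\<Phi> m = m" if "m \<in> ?M" for m
    using that by (rule push_diag_eq_self) (auto simp: M_diag_def merge_diag_eq_self)
  have \<Phi>_J: "?\<Phi> j \<in> ?J" if "j \<in> ?J" for j
    using that J_diag_merge_diag[of _ n "X - Y" Y]
    by (intro push_diag_in_dspan) (auto simp: dspan_def merge_diag_in_Diag)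
  have "left_submod n \<delta> ?J"
    by (rule left_submod_dspan) (rule J_diag_dcomp)
  then have "left_submod n \<delta> C"
    unfolding C_def
    by (rule left_submod_push_diag_preimage)
      (simp add: push_diag_pmult merge_diag_in_Diag dcomp_merge_diag[OF _ _ Yn] dmid_merge_diag)
  moreover have "?J \<subseteq> C" using \<Phi>_J by (auto simp: C_def dspan_def)
  moreover have "\<exists>m\<in>?M. \<exists>c\<in>C. pdiff f (padd m c) \<in> ?J" if "f \<in> PA n" for f
  proof (intro bexI)
    have "?\<Phi> (pdiff f (?\<Phi> f)) = pzero"
      by (simp only: push_diag_pdiff \<Phi>_id[OF \<Phi>_M]) (simp add: pdiff_def pzero_def)
    moreover have "pdiff f (?\<Phi> f) \<in> PA n"
      using that \<Phi>_M by (auto simp: PA_def pdiff_def dspan_def)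
    ultimately show "pdiff f (?\<Phi> f) \<in> C" by (simp add: C_def pzero_in_dspan)
    show "pdiff f (padd (?\<Phi> f) (pdiff f (?\<Phi> f))) \<in> ?J"
      using pzero_in_dspan by (simp add: pdiff_def padd_def pzero_def)
  qed (rule \<Phi>_M)
  moreover have "m \<in> ?J" if "m \<in> ?M" "m \<in> C" for m
    using that \<Phi>_id by (auto simp: C_def)
  ultimately show ?thesis
    unfolding direct_summand_quot_def M_mod_eq_dspan J_mod_eq_dspan by blast
qed

lemma triv_tensor_quot_zero_A_mod:
  assumes x: "x \<in> {1..n}" and n: "2 \<le> n" and N: "pzero \<in> N"
  shows "triv_tensor_quot_zero n \<delta> (A_mod n x :: (int set set \<Rightarrow> 'a::comm_ring_1) set) N"
  unfolding A_mod_def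
proof (rule triv_tensor_quot_zeroI[OF _ N])
  define y where "y = (if x = 1 then 2 else 1 :: nat)"
  have y: "y \<in> {1..n}" "y \<noteq> x" using x n by (auto simp: y_def)
  fix d assume d: "d \<in> Diag n" "{int x} \<in> d"
  show "\<not> is_perm_diag n d \<and> (\<exists>t\<in>Diag n. {int x} \<in> t \<and> dcomp d t = d \<and> dmid d t = 0)"
    using not_perm_diag_singleton[OF d(2)] x isolate_diag_in_Diag singleton_in_isolate_diag[OF x y(1)]
      dcomp_isolate_diag[OF d(1) x y(1) d(2)] dmid_isolate_diag[OF d(1) x y] by auto
qed

lemma triv_tensor_quot_zero_B_mod:
  assumes X: "X \<subseteq> {1..n}" and x: "x \<in> X" and N: "pzero \<in> N"
  shows "triv_tensor_quot_zero n \<delta> (B_mod n X x :: (int set set \<Rightarrow> 'a::comm_ring_1) set) N"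
  unfolding B_mod_def
proof (rule triv_tensor_quot_zeroI[OF _ N])
  fix d assume d: "d \<in> Diag n" "\<exists>y\<in>X. y \<noteq> x \<and> (\<exists>B\<in>d. int x \<in> B \<and> int y \<in> B)"
  then obtain y B where y: "y \<in> X" "y \<noteq> x" and B: "B \<in> d" "int ` {x, y} \<subseteq> B" by auto
  have xy: "{x, y} \<subseteq> {1..n}" using X x y by auto
  obtain B' where "B' \<in> join_diag n {x, y}" "int ` {x, y} \<subseteq> B'"
    using join_diag_has_block[OF xy] by blast
  then have "\<exists>y'\<in>X. y' \<noteq> x \<and> (\<exists>B\<in>join_diag n {x, y}. int x \<in> B \<and> int y' \<in> B)"
    using y by auto
  moreover have "\<not> is_perm_diag n d"
    using B xy y(2) by (intro not_perm_diag_pair[of B d "int x" "int y"]) auto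
  ultimately show "\<not> is_perm_diag n d \<and> (\<exists>t\<in>Diag n.
      (\<exists>y\<in>X. y \<noteq> x \<and> (\<exists>B\<in>t. int x \<in> B \<and> int y \<in> B)) \<and> dcomp d t = d \<and> dmid d t = 0)"
    using dcomp_join_diag[OF d(1) B] dmid_join_diag[OF d(1)]
    by (intro conjI bexI[OF _ join_diag_in_Diag]) simp_all
qed

lemma triv_tensor_quot_zero_M_mod:
  assumes Y: "Y \<subseteq> {1..n}" "2 \<le> card Y" and N: "pzero \<in> N"
  shows "triv_tensor_quot_zero n \<delta> (M_mod n Y :: (int set set \<Rightarrow> 'a::comm_ring_1) set) N"
  unfolding M_mod_eq_dspan
proof (rule triv_tensor_quot_zeroI[OF _ N])
  obtain y1 Y' where Y': "Y = insert y1 Y'" "y1 \<notin> Y'" "1 \<le> card Y'"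
    using Y(2) card_le_Suc_iff[of 1 Y] by auto
  then obtain y2 where "y2 \<in> Y'" by fastforce
  then have y: "y1 \<in> Y" "y2 \<in> Y" "y1 \<noteq> y2" using Y' by auto
  fix d assume d: "d \<in> Diag n" "M_diag Y d"
  then obtain B where B: "B \<in> d" "int ` Y \<subseteq> B" by (auto simp: M_diag_def)
  have "\<not> is_perm_diag n d"
    using B y Y(1) by (intro not_perm_diag_pair[of B d "int y1" "int y2"]) auto
  moreover have "M_diag Y (join_diag n Y)"
    using join_diag_has_block Y(1) y(1) by (auto simp: M_diag_def)
  ultimately show "\<not> is_perm_diag n d \<and> (\<exists>t\<in>Diag n. M_diag Y t \<and> dcomp d t = d \<and> dmid d t = 0)"
    using dcomp_join_diag[OF d(1) B] dmid_join_diag[OF d(1)]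
    by (intro conjI bexI[OF _ join_diag_in_Diag]) simp_all
qed

theorem lemma4p5:
  fixes \<delta> :: "'a::comm_ring_1" and n :: nat
  shows "(\<forall>X x. X \<subseteq> {1..n} \<and> x \<in> X \<and> n \<ge> 2 \<longrightarrow>
            triv_tensor_quot_zero n \<delta> (A_mod n x :: (int set set \<Rightarrow> 'a) set)
              (A_mod n x \<inter> J_mod n (X - {x})))
       \<and> (\<forall>X x. X \<subseteq> {1..n} \<and> x \<in> X \<longrightarrow>
            triv_tensor_quot_zero n \<delta> (B_mod n X x :: (int set set \<Rightarrow> 'a) set)
              (B_mod n X x \<inter> J_mod n (X - {x})))
       \<and> (\<forall>X Y. Y \<subseteq> X \<and> X \<subseteq> {1..n} \<and> card Y \<ge> 2 \<longrightarrow>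
            triv_tensor_quot_zero n \<delta> (M_mod n Y :: (int set set \<Rightarrow> 'a) set)
              (M_mod n Y \<inter> J_mod n (X - Y))
          \<and> direct_summand_quot n \<delta> (M_mod n Y :: (int set set \<Rightarrow> 'a) set) (J_mod n (X - Y)))"
proof (intro conjI allI impI)
  fix X x assume "X \<subseteq> {1..n} \<and> x \<in> X \<and> n \<ge> 2"
  then show "triv_tensor_quot_zero n \<delta> (A_mod n x :: (int set set \<Rightarrow> 'a) set)
      (A_mod n x \<inter> J_mod n (X - {x}))"
    by (intro triv_tensor_quot_zero_A_mod) (auto simp: A_mod_def J_mod_def pzero_in_dspan)
next
  fix X x assume "X \<subseteq> {1..n} \<and> x \<in> X"
  then show "triv_tensor_quot_zero n \<delta> (B_mod n X x :: (int set set \<Rightarrow> 'a) set)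
      (B_mod n X x \<inter> J_mod n (X - {x}))"
    by (intro triv_tensor_quot_zero_B_mod) (auto simp: B_mod_def J_mod_def pzero_in_dspan)
next
  fix X Y assume h: "Y \<subseteq> X \<and> X \<subseteq> {1..n} \<and> 2 \<le> card Y"
  then show "triv_tensor_quot_zero n \<delta> (M_mod n Y :: (int set set \<Rightarrow> 'a) set)
      (M_mod n Y \<inter> J_mod n (X - Y))"
    by (intro triv_tensor_quot_zero_M_mod) (auto simp: M_mod_def J_mod_def pzero_in_dspan)
  from h show "direct_summand_quot n \<delta> (M_mod n Y :: (int set set \<Rightarrow> 'a) set) (J_mod n (X - Y))"
    by (intro direct_summand_quot_M_mod) auto
qed

end
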